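(* Fix $\alpha\in(0,1]$, $\epsilon>0$, a function $A:(2\pi,\infty)\to[0,\infty)$ and a function $B:\{(\beta_L,\beta_R)\in(0,\infty)^2:\beta_L\beta_R>4\pi^2\}\to[0,\infty)$. Consider the class $\mathcal{C}$ of all unitary, modular invariant 2D CFT spectra (any central charge $c\geqslant0$) that have a normalizable vacuum ($n_{0,0}\geqslant1$) and satisfy $$\sum_{h+\bar h\leqslant\frac c{12}+\epsilon}n_{h,\bar h}e^{-(h+\bar h)\beta}\leqslant A(\beta)\ \ (\beta>2\pi),\qquad \sum_{\min(h,\bar h)\leqslant\frac{\alpha c}{24}}n_{h,\bar h}e^{-h\beta_L-\bar h\beta_R}\leqslant B(\beta_L,\beta_R)\ \ (\beta_L\beta_R>4\pi^2).$$ Then for each $(\beta_L,\beta_R)\in\mathcal{D}_\alpha$ there is a constant $K<\infty$ (depending on $\beta_L,\beta_R$ and the fixed data $\alpha,\epsilon,A,B$, but not on the theory or on $c$) such that every theory in $\mathcal{C}$ satisfies $\left|\log Z(\beta_L,\beta_R)-\frac c{24}(\beta_L+\beta_R)\right|\leqslant K$; and for each $(\beta_L,\beta_R)$ with $(4\pi^2/\beta_L,4\pi^2/\beta_R)\in\mathcal{D}_\alpha$ there is such a constant $K$ with $\left|\log Z(\beta_L,\beta_R)-\frac{\pi^2c}{6}\left(\frac1{\beta_L}+\frac1{\beta_R}\right)\right|\leqslant K$ for every theory in $\mathcal{C}$. In particular, as $c\to\infty$ with $\beta_L,\beta_R$ fixed, $\log Z=\frac c{24}(\beta_L+\beta_R)+O(1)$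 on $\mathcal{D}_\alpha$ and $\log Z=\frac{\pi^2c}{6}(\frac1{\beta_L}+\frac1{\beta_R})+O(1)$ on its image under $(\beta_L,\beta_R)\mapsto(4\pi^2/\beta_L,4\pi^2/\beta_R)$.
   Context: A unitary, modular invariant 2D CFT spectrum consists of a real number $c\geqslant0$ (central charge) and a countable collection of pairs $(h,\bar h)$ with $h,\bar h\geqslant0$, each with multiplicity $n_{h,\bar h}\in\mathbb{N}$, such that $Z(\beta_L,\beta_R)=\sum_{h,\bar h}n_{h,\bar h}e^{-(h-\frac c{24})\beta_L-(\bar h-\frac c{24})\beta_R}$ is finite for all $\beta_L,\beta_R>0$ and $Z(\beta_L,\beta_R)=Z(4\pi^2/\beta_L,4\pi^2/\beta_R)$. Let $\phi_\alpha(\beta)=\max\left\{\frac{4\pi^2}{\beta},\ \frac12\left(\alpha(4\pi-\beta)+\sqrt{\alpha^2(4\pi-\beta)^2+16\pi^2(1-\alpha)}\right)\right\}$ and $\mathcal{D}_\alpha=\{\beta_R>2\pi,\ \beta_L>\phi_\alpha(\beta_R)\}\cup\{\beta_L>2\pi,\ \beta_R>\phi_\alpha(\beta_L)\}\subset(0,\infty)^2$. *)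

theory Defs
  imports "HOL-Analysis.Analysis"
begin

text \<open>A spectrum is given by a central charge c and a multiplicity function
  n :: real \<times> real \<Rightarrow> nat, where n (h, hb) is the multiplicity of the pair (h, hb);
  pairs not in the spectrum have multiplicity 0.\<close>

definition partition_fn :: "real \<Rightarrow> (real \<times> real \<Rightarrow> nat) \<Rightarrow> real \<Rightarrow> real \<Rightarrow> real" where
  "partition_fn c n bL bR =
     (\<Sum>\<^sub>\<infinity>(h, hb)\<in>UNIV. real (n (h, hb)) * exp (- (h - c/24) * bL - (hb - c/24) * bR))"

definition unitary_modular_cft :: "real \<Rightarrow> (real \<times> real \<Rightarrow> nat) \<Rightarrow> bool" where
  "unitary_modular_cft c n \<longleftrightarrow>
     c \<ge> 0 \<and>
     countable {p. n p > 0} \<and>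
     (\<forall>h hb. n (h, hb) > 0 \<longrightarrow> h \<ge> 0 \<and> hb \<ge> 0) \<and>
     (\<forall>bL bR. bL > 0 \<longrightarrow> bR > 0 \<longrightarrow>
        (\<lambda>(h, hb). real (n (h, hb)) * exp (- (h - c/24) * bL - (hb - c/24) * bR)) summable_on UNIV) \<and>
     (\<forall>bL bR. bL > 0 \<longrightarrow> bR > 0 \<longrightarrow>
        partition_fn c n bL bR = partition_fn c n (4*pi^2/bL) (4*pi^2/bR))"

definition phi_alpha :: "real \<Rightarrow> real \<Rightarrow> real" where
  "phi_alpha \<alpha> \<beta> = max (4*pi^2/\<beta>)
     ((\<alpha> * (4*pi - \<beta>) + sqrt (\<alpha>^2 * (4*pi - \<beta>)^2 + 16*pi^2*(1 - \<alpha>))) / 2)"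

definition D_alpha :: "real \<Rightarrow> (real \<times> real) set" where
  "D_alpha \<alpha> = {(bL, bR). bR > 2*pi \<and> bL > phi_alpha \<alpha> bR}
              \<union> {(bL, bR). bL > 2*pi \<and> bR > phi_alpha \<alpha> bL}"

definition in_class :: "real \<Rightarrow> real \<Rightarrow> (real \<Rightarrow> real) \<Rightarrow> (real \<Rightarrow> real \<Rightarrow> real)
    \<Rightarrow> real \<Rightarrow> (real \<times> real \<Rightarrow> nat) \<Rightarrow> bool" where
  "in_class \<alpha> \<epsilon> A B c n \<longleftrightarrow>
     unitary_modular_cft c n \<and> n (0, 0) \<ge> 1 \<and>
     (\<forall>\<beta>. \<beta> > 2*pi \<longrightarrow>
        (\<Sum>\<^sub>\<infinity>(h, hb)\<in>{(h, hb). h + hb \<le> c/12 + \<epsilon>}. real (n (h, hb)) * exp (- (h + hb) * \<beta>)) \<le> A \<beta>) \<and>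
     (\<forall>bL bR. bL > 0 \<longrightarrow> bR > 0 \<longrightarrow> bL * bR > 4*pi^2 \<longrightarrow>
        (\<Sum>\<^sub>\<infinity>(h, hb)\<in>{(h, hb). min h hb \<le> \<alpha> * c / 24}. real (n (h, hb)) * exp (- h * bL - hb * bR)) \<le> B bL bR)"

end

theory Submission
  imports Defs
begin

text \<open>The vacuum gives Z(\<beta>L, \<beta>R) \<ge> exp (c (\<beta>L + \<beta>R)/24), so it suffices to bound Z by
  K exp (c (\<beta>L + \<beta>R)/24) uniformly over the class. For \<beta>L, \<beta>R > 2 pi this is the
  Hartman--Keller--Stoica bound. In general, split the spectrum at twist \<alpha>c/24: the low-twist part is
  controlled by B, while the high-twist part can be moved to smaller temperatures (\<beta>1, \<beta>2) at a cost
  exp ((1 - \<alpha>) c (\<beta>L - \<beta>1 + \<beta>R - \<beta>2)/24) and then, by modular invariance, to the dual point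
  (4 pi^2/\<beta>1, 4 pi^2/\<beta>2). Hence the bound propagates from a dual point whenever the exponents balance.
  Iterating (x, b) \<mapsto> (v, 4 pi^2/x) with x \<le> 2 pi keeps chain_level fixed and raises chain_potential x
  by a uniform amount as long as chain_level is positive, until a single step lands in the HKS region;
  D_alpha is precisely the region where chain_level is positive. The dual region follows by modular
  invariance.\<close>

definition partition_term :: "real \<Rightarrow> (real \<times> real \<Rightarrow> nat) \<Rightarrow> real \<Rightarrow> real \<Rightarrow> real \<times> real \<Rightarrow> real" where
  "partition_term c n bL bR = (\<lambda>(h, hb). real (n (h, hb)) * exp (- (h - c/24) * bL - (hb - c/24) * bR))"

lemma partition_fn_eq_infsum: "partition_fn c n bL bR = infsum (partition_term c n bL bR) UNIV"
  unfolding partition_fn_def partition_term_def by simp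

lemma partition_term_nonneg: "0 \<le> partition_term c n bL bR p"
  unfolding partition_term_def by (cases p) auto

lemma partition_term_summable_on:
  assumes "unitary_modular_cft c n" "0 < bL" "0 < bR"
  shows "partition_term c n bL bR summable_on S"
proof -
  have "partition_term c n bL bR summable_on UNIV"
    using assms unfolding unitary_modular_cft_def partition_term_def by blast
  then show ?thesis
    using summable_on_subset_banach by blast
qed

lemma infsum_partition_term_le_partition_fn:
  assumes "unitary_modular_cft c n" "0 < bL" "0 < bR"
  shows "infsum (partition_term c n bL bR) S \<le> partition_fn c n bL bR"
  unfolding partition_fn_eq_infsum
  by (rule infsum_mono_neutral) (use partition_term_summable_on[OF assms] partition_term_nonneg in auto)

lemma partition_fn_split:
  assumes "unitary_modular_cft c n" "0 < bL" "0 < bR"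
  shows "partition_fn c n bL bR = infsum (partition_term c n bL bR) S + infsum (partition_term c n bL bR) (- S)"
  using infsum_Un_disjoint[OF partition_term_summable_on[OF assms] partition_term_summable_on[OF assms], of S "- S"]
  by (simp add: partition_fn_eq_infsum)

lemma partition_fn_modular:
  assumes "unitary_modular_cft c n" "0 < bL" "0 < bR"
  shows "partition_fn c n bL bR = partition_fn c n (4*pi^2/bL) (4*pi^2/bR)"
  using assms unfolding unitary_modular_cft_def by blast

lemma partition_term_rescale:
  "partition_term c n bL bR (h, hb) =
     exp (- (h - c/24) * (bL - \<beta>1) - (hb - c/24) * (bR - \<beta>2)) * partition_term c n \<beta>1 \<beta>2 (h, hb)"
  unfolding partition_term_def by (simp add: mult_exp_exp field_simps)

lemma infsum_partition_term_le_rescaled: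
  assumes cft: "unitary_modular_cft c n" and pos: "0 < bL" "0 < bR" "0 < \<beta>1" "0 < \<beta>2"
    and exponent: "\<And>h hb. (h, hb) \<in> S \<Longrightarrow> 0 < n (h, hb) \<Longrightarrow>
        - (h - c/24) * (bL - \<beta>1) - (hb - c/24) * (bR - \<beta>2) \<le> E"
  shows "infsum (partition_term c n bL bR) S \<le> exp E * infsum (partition_term c n \<beta>1 \<beta>2) S"
proof -
  have "infsum (partition_term c n bL bR) S \<le> infsum (\<lambda>p. exp E * partition_term c n \<beta>1 \<beta>2 p) S"
  proof (rule infsum_mono)
    fix p assume "p \<in> S"
    obtain h hb where p: "p = (h, hb)" by (cases p)
    show "partition_term c n bL bR p \<le> exp E * partition_term c n \<beta>1 \<beta>2 p"
    proof (cases "n (h, hb) = 0")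
      case True
      then show ?thesis by (simp add: p partition_term_def)
    next
      case False
      then show ?thesis
        unfolding p partition_term_rescale[of c n bL bR h hb \<beta>1 \<beta>2]
        using exponent \<open>p \<in> S\<close> p partition_term_nonneg by (intro mult_right_mono) auto
    qed
  qed (use partition_term_summable_on[OF cft] pos in \<open>auto intro: summable_on_cmult_right\<close>)
  also have "\<dots> = exp E * infsum (partition_term c n \<beta>1 \<beta>2) S"
    by (rule infsum_cmult_right')
  finally show ?thesis .
qed

lemma infsum_partition_term_eq:
  "infsum (partition_term c n bL bR) S =
     exp (c*(bL + bR)/24) * (\<Sum>\<^sub>\<infinity>(h, hb)\<in>S. real (n (h, hb)) * exp (- h * bL - hb * bR))"
proof -
  have "infsum (partition_term c n bL bR) S =
      (\<Sum>\<^sub>\<infinity>p\<in>S. exp (c*(bL + bR)/24) * (case p of (h, hb) \<Rightarrow> real (n (h, hb)) * exp (- h * bL - hb * bR)))"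
    by (rule infsum_cong) (auto simp: partition_term_def mult_exp_exp algebra_simps add_divide_distrib)
  then show ?thesis
    by (simp add: infsum_cmult_right')
qed

lemma partition_fn_ge_vacuum:
  assumes cft: "unitary_modular_cft c n" and vacuum: "1 \<le> n (0, 0)" and pos: "0 < bL" "0 < bR"
  shows "exp (c*(bL + bR)/24) \<le> partition_fn c n bL bR"
proof -
  have "exp (c*(bL + bR)/24) \<le> infsum (partition_term c n bL bR) {(0, 0)}"
    using vacuum by (simp add: partition_term_def algebra_simps add_divide_distrib)
  also have "\<dots> \<le> partition_fn c n bL bR"
    by (rule infsum_partition_term_le_partition_fn[OF cft pos])
  finally show ?thesis .
qed

lemma in_classD:
  assumes "in_class \<alpha> \<epsilon> A B c n"
  shows "unitary_modular_cft c n" "1 \<le> n (0, 0)"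
    and "\<And>\<beta>. 2*pi < \<beta> \<Longrightarrow>
      (\<Sum>\<^sub>\<infinity>(h, hb)\<in>{(h, hb). h + hb \<le> c/12 + \<epsilon>}. real (n (h, hb)) * exp (- (h + hb) * \<beta>)) \<le> A \<beta>"
    and "\<And>bL bR. 0 < bL \<Longrightarrow> 0 < bR \<Longrightarrow> 4*pi^2 < bL * bR \<Longrightarrow>
      (\<Sum>\<^sub>\<infinity>(h, hb)\<in>{(h, hb). min h hb \<le> \<alpha> * c / 24}. real (n (h, hb)) * exp (- h * bL - hb * bR)) \<le> B bL bR"
  using assms unfolding in_class_def by auto

lemma dual_lt_self:
  assumes "2*pi < \<beta>"
  shows "4*pi^2/\<beta> < \<beta>"
proof -
  have "0 < \<beta>"
    using assms pi_gt_zero by linarith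
  have "(2*pi) * (2*pi) < \<beta> * \<beta>"
    using assms pi_gt_zero \<open>0 < \<beta>\<close> by (intro mult_strict_mono) auto
  then show ?thesis
    using \<open>0 < \<beta>\<close> by (simp add: divide_less_eq power2_eq_square)
qed

text \<open>Hartman--Keller--Stoica: the states above c/12 + \<epsilon> contribute to Z(\<beta>, \<beta>) at most a fraction
  q < 1 of Z(\<beta>', \<beta>') = Z(\<beta>, \<beta>), where \<beta>' = 4 pi^2/\<beta>.\<close>
lemma partition_fn_diagonal_le:
  assumes cl: "in_class \<alpha> \<epsilon> A B c n" and "0 < \<epsilon>" and \<beta>: "2*pi < \<beta>"
  shows "partition_fn c n \<beta> \<beta> \<le> exp (c*\<beta>/12) * A \<beta> / (1 - exp (- \<epsilon> * (\<beta> - 4*pi^2/\<beta>)))"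
proof -
  let ?L = "{(h, hb). h + hb \<le> c/12 + \<epsilon>}"
  define \<beta>' where "\<beta>' = 4*pi^2/\<beta>"
  define q where "q = exp (- \<epsilon> * (\<beta> - \<beta>'))"
  define Z where "Z = partition_fn c n \<beta> \<beta>"
  have cft: "unitary_modular_cft c n" by (rule in_classD(1)[OF cl])
  have "0 < \<beta>"
    using \<beta> pi_gt_zero by linarith
  then have pos: "0 < \<beta>" "0 < \<beta>'"
    unfolding \<beta>'_def by simp_all
  have "\<beta>' < \<beta>"
    using dual_lt_self[OF \<beta>] unfolding \<beta>'_def .
  have "q < 1"
    unfolding q_def using \<open>0 < \<epsilon>\<close> \<open>\<beta>' < \<beta>\<close> by simp
  have light: "infsum (partition_term c n \<beta> \<beta>) ?L \<le> exp (c*\<beta>/12) * A \<beta>"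
  proof -
    have "infsum (partition_term c n \<beta> \<beta>) ?L =
        exp (c*\<beta>/12) * (\<Sum>\<^sub>\<infinity>(h, hb)\<in>?L. real (n (h, hb)) * exp (- (h + hb) * \<beta>))"
      by (simp add: infsum_partition_term_eq algebra_simps)
    then show ?thesis
      using in_classD(3)[OF cl \<beta>] by simp
  qed
  have "infsum (partition_term c n \<beta> \<beta>) (- ?L) \<le> q * infsum (partition_term c n \<beta>' \<beta>') (- ?L)"
    unfolding q_def
  proof (rule infsum_partition_term_le_rescaled[OF cft pos(1,1,2,2)])
    fix h hb assume "(h, hb) \<in> - ?L"
    then have "\<epsilon> * (\<beta> - \<beta>') \<le> (h + hb - c/12) * (\<beta> - \<beta>')"
      using \<open>\<beta>' < \<beta>\<close> by (intro mult_right_mono) auto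
    then show "- (h - c/24) * (\<beta> - \<beta>') - (hb - c/24) * (\<beta> - \<beta>') \<le> - \<epsilon> * (\<beta> - \<beta>')"
      by (simp add: algebra_simps)
  qed
  also have "\<dots> \<le> q * Z"
    using infsum_partition_term_le_partition_fn[OF cft pos(2,2)] partition_fn_modular[OF cft pos(1,1)]
    unfolding Z_def \<beta>'_def q_def by (intro mult_left_mono) auto
  finally have heavy: "infsum (partition_term c n \<beta> \<beta>) (- ?L) \<le> q * Z" .
  have "Z * (1 - q) \<le> exp (c*\<beta>/12) * A \<beta>"
    using partition_fn_split[OF cft pos(1,1), of ?L] light heavy unfolding Z_def by (simp add: algebra_simps)
  then show ?thesis
    using \<open>q < 1\<close> unfolding Z_def q_def \<beta>'_def by (simp add: le_divide_eq)
qed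

definition vacuum_dominated :: "real \<Rightarrow> real \<Rightarrow> (real \<Rightarrow> real) \<Rightarrow> (real \<Rightarrow> real \<Rightarrow> real) \<Rightarrow> real \<Rightarrow> real \<Rightarrow> bool" where
  "vacuum_dominated \<alpha> \<epsilon> A B bL bR \<longleftrightarrow>
     (\<exists>K. \<forall>c n. in_class \<alpha> \<epsilon> A B c n \<longrightarrow> partition_fn c n bL bR \<le> K * exp (c*(bL + bR)/24))"

lemma vacuum_dominated_low_temperature:
  assumes "0 < \<epsilon>" "2*pi < bL" "2*pi < bR"
  shows "vacuum_dominated \<alpha> \<epsilon> A B bL bR"
proof -
  define \<gamma> where "\<gamma> = min bL bR"
  have pos: "0 < bL" "0 < bR"
    using assms pi_gt_zero by linarith+
  have \<gamma>: "2*pi < \<gamma>" "0 < \<gamma>" "\<gamma> \<le> bL" "\<gamma> \<le> bR"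
    using assms pos unfolding \<gamma>_def by auto
  define K where "K = A \<gamma> / (1 - exp (- \<epsilon> * (\<gamma> - 4*pi^2/\<gamma>)))"
  have "partition_fn c n bL bR \<le> K * exp (c*(bL + bR)/24)" if cl: "in_class \<alpha> \<epsilon> A B c n" for c n
  proof -
    have cft: "unitary_modular_cft c n" by (rule in_classD(1)[OF cl])
    have "partition_fn c n bL bR \<le> exp (c*(bL - \<gamma> + bR - \<gamma>)/24) * partition_fn c n \<gamma> \<gamma>"
      unfolding partition_fn_eq_infsum
    proof (rule infsum_partition_term_le_rescaled[OF cft _ _ \<gamma>(2,2)])
      fix h hb assume "0 < n (h, hb)"
      then have "0 \<le> h" "0 \<le> hb"
        using cft unfolding unitary_modular_cft_def by auto
      then have "0 \<le> h * (bL - \<gamma>) + hb * (bR - \<gamma>)"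
        using \<gamma> by simp
      moreover have "- (h - c/24) * (bL - \<gamma>) - (hb - c/24) * (bR - \<gamma>) =
          c*(bL - \<gamma> + bR - \<gamma>)/24 - (h * (bL - \<gamma>) + hb * (bR - \<gamma>))"
        by (simp add: field_simps)
      ultimately show "- (h - c/24) * (bL - \<gamma>) - (hb - c/24) * (bR - \<gamma>) \<le> c*(bL - \<gamma> + bR - \<gamma>)/24"
        by linarith
    qed (use \<gamma> pos in auto)
    also have "\<dots> \<le> exp (c*(bL - \<gamma> + bR - \<gamma>)/24) * (exp (c*\<gamma>/12) * K)"
      using partition_fn_diagonal_le[OF cl assms(1) \<gamma>(1)] unfolding K_def
      by (intro mult_left_mono) auto
    also have "\<dots> = K * exp (c*(bL + bR)/24)"
      by (simp add: mult_exp_exp field_simps)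
    finally show ?thesis .
  qed
  then show ?thesis
    unfolding vacuum_dominated_def by blast
qed

lemma vacuum_dominated_from_dual:
  assumes "\<alpha> \<le> 1" and \<beta>: "0 < \<beta>1" "\<beta>1 \<le> x" "0 < \<beta>2" "\<beta>2 \<le> b" and "4*pi^2 < x * b"
    and dual: "vacuum_dominated \<alpha> \<epsilon> A B (4*pi^2/\<beta>1) (4*pi^2/\<beta>2)"
    and budget: "4*pi^2/\<beta>1 + 4*pi^2/\<beta>2 + (1 - \<alpha>)*(x + b - \<beta>1 - \<beta>2) \<le> x + b"
  shows "vacuum_dominated \<alpha> \<epsilon> A B x b"
proof -
  obtain K where K: "\<And>c n. in_class \<alpha> \<epsilon> A B c n \<Longrightarrow>
      partition_fn c n (4*pi^2/\<beta>1) (4*pi^2/\<beta>2) \<le> K * exp (c*(4*pi^2/\<beta>1 + 4*pi^2/\<beta>2)/24)"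
    using dual unfolding vacuum_dominated_def by blast
  have pos: "0 < x" "0 < b" using \<beta> by auto
  have "partition_fn c n x b \<le> (B x b + max K 0) * exp (c*(x + b)/24)"
    if cl: "in_class \<alpha> \<epsilon> A B c n" for c n
  proof -
    let ?M = "{(h, hb). min h hb \<le> \<alpha> * c / 24}"
    let ?E = "c * ((1 - \<alpha>)*(x + b - \<beta>1 - \<beta>2)) / 24"
    have cft: "unitary_modular_cft c n" by (rule in_classD(1)[OF cl])
    have "0 \<le> c" using cft unfolding unitary_modular_cft_def by simp
    have low_twist: "infsum (partition_term c n x b) ?M \<le> exp (c*(x + b)/24) * B x b"
      using in_classD(4)[OF cl pos \<open>4*pi^2 < x * b\<close>] by (simp add: infsum_partition_term_eq)
    have "infsum (partition_term c n x b) (- ?M) \<le> exp ?E * infsum (partition_term c n \<beta>1 \<beta>2) (- ?M)"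
    proof (rule infsum_partition_term_le_rescaled[OF cft pos \<beta>(1,3)])
      fix h hb assume "(h, hb) \<in> - ?M"
      then have "(\<alpha>*c/24 - c/24) * (x - \<beta>1) \<le> (h - c/24) * (x - \<beta>1)"
            and "(\<alpha>*c/24 - c/24) * (b - \<beta>2) \<le> (hb - c/24) * (b - \<beta>2)"
        using \<beta> by (auto intro!: mult_right_mono)
      moreover have "- (\<alpha>*c/24 - c/24) * (x - \<beta>1) - (\<alpha>*c/24 - c/24) * (b - \<beta>2) = ?E"
        by (simp add: field_simps)
      ultimately show "- (h - c/24) * (x - \<beta>1) - (hb - c/24) * (b - \<beta>2) \<le> ?E"
        by linarith
    qed
    also have "\<dots> \<le> exp ?E * partition_fn c n (4*pi^2/\<beta>1) (4*pi^2/\<beta>2)"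
      using infsum_partition_term_le_partition_fn[OF cft \<beta>(1,3)] partition_fn_modular[OF cft \<beta>(1,3)]
      by simp
    also have "\<dots> \<le> exp ?E * (max K 0 * exp (c*(4*pi^2/\<beta>1 + 4*pi^2/\<beta>2)/24))"
      using K[OF cl] by (intro mult_left_mono) (auto intro: order_trans mult_right_mono)
    also have "\<dots> \<le> max K 0 * exp (c*(x + b)/24)"
    proof -
      have "c * ((1 - \<alpha>)*(x + b - \<beta>1 - \<beta>2) + (4*pi^2/\<beta>1 + 4*pi^2/\<beta>2)) \<le> c * (x + b)"
        using budget \<open>0 \<le> c\<close> by (intro mult_left_mono) (auto simp: algebra_simps)
      then have "?E + c*(4*pi^2/\<beta>1 + 4*pi^2/\<beta>2)/24 \<le> c*(x + b)/24"
        by (simp add: distrib_left add_divide_distrib[symmetric])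
      then show ?thesis
        by (simp add: mult_exp_exp mult.left_commute mult_left_mono)
    qed
    finally have high_twist: "infsum (partition_term c n x b) (- ?M) \<le> max K 0 * exp (c*(x + b)/24)" .
    show ?thesis
      using partition_fn_split[OF cft pos, of ?M] low_twist high_twist by (simp add: algebra_simps)
  qed
  then show ?thesis
    unfolding vacuum_dominated_def by blast
qed

text \<open>A step (x, b) \<mapsto> (v, 4 pi^2/x) of the chain is chosen so that chain_level is preserved
  (chain_level_dual_eq_iff); the budget inequality of vacuum_dominated_from_dual then holds with equality.\<close>

definition chain_potential :: "real \<Rightarrow> real \<Rightarrow> real" where
  "chain_potential \<alpha> x = x - (1 - \<alpha>) * (4*pi^2/x)"

definition chain_level :: "real \<Rightarrow> real \<Rightarrow> real \<Rightarrow> real" where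
  "chain_level \<alpha> x b = chain_potential \<alpha> x + \<alpha> * (b - 4*pi)"

lemma chain_potential_mono:
  assumes "\<alpha> \<le> 1" "0 < x" "x \<le> y"
  shows "chain_potential \<alpha> x \<le> chain_potential \<alpha> y"
proof -
  have "4*pi^2/y \<le> 4*pi^2/x"
    using assms by (intro divide_left_mono) auto
  then have "(1 - \<alpha>) * (4*pi^2/y) \<le> (1 - \<alpha>) * (4*pi^2/x)"
    using assms by (intro mult_left_mono) auto
  then show ?thesis
    unfolding chain_potential_def using assms by linarith
qed

lemma chain_level_self_dual: "chain_level \<alpha> y (4*pi^2/y) = y + (2*\<alpha> - 1)*(4*pi^2/y) - 4*pi*\<alpha>"
  unfolding chain_level_def chain_potential_def by (cases "y = 0") (simp_all add: field_simps)

lemma dual_gt_2pi: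
  assumes "0 < y" "y < 2*pi"
  shows "2*pi < 4*pi^2/y"
proof -
  have "2*pi*y < 2*pi*(2*pi)"
    using assms by simp
  then show ?thesis
    using assms by (simp add: less_divide_eq power2_eq_square)
qed

lemma partner_gt_2pi:
  assumes "0 < x" "x \<le> 2*pi" "4*pi^2 < x * b"
  shows "2*pi < b"
proof (rule ccontr)
  assume "\<not> 2*pi < b"
  moreover have "0 < b"
    using assms by (intro zero_less_mult_pos[of x b]) (auto intro: less_trans[rotated])
  ultimately have "x * b \<le> 2*pi * (2*pi)"
    using assms pi_gt_zero by (intro mult_mono) auto
  then show False
    using assms by (simp add: power2_eq_square)
qed

lemma dual_cost_le:
  assumes "0 \<le> \<alpha>" "0 < t" "t \<le> pi" "0 < y" "y \<le> 2*pi"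
  shows "4*pi^2/min y (2*pi - t) + (1 - \<alpha>)*(y - min y (2*pi - t)) \<le> 4*pi^2/y + 3*t"
proof (cases "y \<le> 2*pi - t")
  case True
  then show ?thesis using assms by simp
next
  case False
  have "4*pi^2 \<le> (2*pi + 2*t) * (2*pi - t)"
    using assms by (simp add: algebra_simps power2_eq_square)
  then have "4*pi^2/(2*pi - t) \<le> 2*pi + 2*t"
    using assms by (simp add: divide_le_eq)
  moreover have "2*pi \<le> 4*pi^2/y"
    using assms by (simp add: le_divide_eq power2_eq_square)
  moreover have "(1 - \<alpha>)*(y - (2*pi - t)) \<le> t"
    using assms False mult_nonneg_nonneg[of \<alpha> "y - (2*pi - t)"] by (simp add: algebra_simps)
  ultimately show ?thesis
    using False by simp
qed

lemma add_divide_le_max: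
  fixes a y d k :: real
  assumes "0 < a" "a \<le> y" "y \<le> d"
  shows "y + k/y \<le> max (a + k/a) (d + k/d)"
proof (rule ccontr)
  assume "\<not> ?thesis"
  moreover have "(y + k/y) - (a + k/a) = (y - a) * (1 - k/(a*y))"
    and "(y + k/y) - (d + k/d) = (d - y) * (k/(d*y) - 1)"
    using assms by (simp_all add: field_simps)
  ultimately have "0 < (y - a) * (1 - k/(a*y))" "0 < (d - y) * (k/(d*y) - 1)"
    by auto
  then have "0 < 1 - k/(a*y)" "0 < k/(d*y) - 1"
    using assms by (simp_all add: zero_less_mult_iff)
  then have "k < a*y" "d*y < k"
    using assms by (simp_all add: field_simps)
  moreover have "a*y \<le> d*y"
    using assms by (intro mult_right_mono) auto
  ultimately show False
    by linarith
qed

lemma chain_level_pos: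
  assumes "\<alpha> \<le> 1" "0 < x"
    and root: "(\<alpha>*(4*pi - b) + sqrt (\<alpha>^2*(4*pi - b)^2 + 16*pi^2*(1 - \<alpha>)))/2 < x"
  shows "0 < chain_level \<alpha> x b"
proof -
  define a where "a = \<alpha>*(4*pi - b)"
  define s where "s = sqrt (a^2 + 16*pi^2*(1 - \<alpha>))"
  have "0 \<le> a^2 + 16*pi^2*(1 - \<alpha>)"
    using assms by simp
  then have "s^2 = a^2 + 16*pi^2*(1 - \<alpha>)" "0 \<le> s"
    unfolding s_def by simp_all
  moreover have "s < 2*x - a"
    using root unfolding s_def a_def by (simp add: power_mult_distrib)
  ultimately have "s^2 < (2*x - a)^2"
    by (intro power_strict_mono) auto
  then have "0 < x^2 - a*x - 4*pi^2*(1 - \<alpha>)"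
    using \<open>s^2 = _\<close> by (simp add: power2_eq_square algebra_simps)
  moreover have "chain_level \<alpha> x b = (x^2 - a*x - 4*pi^2*(1 - \<alpha>))/x"
    unfolding chain_level_def chain_potential_def a_def using assms by (simp add: field_simps power2_eq_square)
  ultimately show ?thesis
    using assms by simp
qed

lemma chain_level_dual_eq_iff:
  "chain_level \<alpha> v (4*pi^2/x) = chain_level \<alpha> x b \<longleftrightarrow> chain_potential \<alpha> v = x + \<alpha>*b - 4*pi^2/x"
  unfolding chain_level_def chain_potential_def
  by (auto simp: left_diff_distrib right_diff_distrib diff_divide_distrib)

lemma chain_successor_exists:
  assumes "0 \<le> \<alpha>" "\<alpha> \<le> 1" "0 < x" "x \<le> 2*pi" "4*pi^2 < x * b"
    and not_terminal: "x + \<alpha>*b - 4*pi^2/x \<le> 2*pi*\<alpha>"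
  obtains v where "x \<le> v" "4*pi^2/b \<le> v" "v \<le> 2*pi" "chain_level \<alpha> v (4*pi^2/x) = chain_level \<alpha> x b"
proof -
  define T where "T = x + \<alpha>*b - 4*pi^2/x"
  define lo where "lo = max x (4*pi^2/b)"
  have "2*pi < b"
    by (rule partner_gt_2pi) (use assms in auto)
  then have "0 < b"
    using pi_gt_zero by linarith
  have "4*pi^2/x < b" "4*pi^2/b < x"
    using assms \<open>0 < b\<close> by (simp_all add: divide_less_eq mult.commute)
  have "(2*pi) * (2*pi) < 2*pi * b"
    using \<open>2*pi < b\<close> by (intro mult_strict_left_mono) auto
  then have "4*pi^2/b < 2*pi"
    using \<open>0 < b\<close> by (simp add: divide_less_eq power2_eq_square)
  have "T - chain_potential \<alpha> x = \<alpha> * (b - 4*pi^2/x)"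
    unfolding T_def chain_potential_def by (simp add: algebra_simps add_divide_distrib[symmetric])
  moreover have "0 \<le> \<alpha> * (b - 4*pi^2/x)"
    using \<open>4*pi^2/x < b\<close> assms by simp
  ultimately have "chain_potential \<alpha> x \<le> T"
    by linarith
  moreover have "chain_potential \<alpha> (4*pi^2/b) \<le> T"
    using \<open>4*pi^2/x < b\<close> \<open>4*pi^2/b < x\<close> \<open>0 < b\<close> unfolding T_def chain_potential_def by (simp add: algebra_simps)
  ultimately have "chain_potential \<alpha> lo \<le> T"
    unfolding lo_def by (simp add: max_def)
  moreover have "T \<le> chain_potential \<alpha> (2*pi)"
    using not_terminal unfolding T_def chain_potential_def by (simp add: power2_eq_square algebra_simps)
  moreover have "lo \<le> 2*pi" "0 < lo"
    using assms \<open>4*pi^2/b < 2*pi\<close> unfolding lo_def by auto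
  moreover have "continuous_on {lo..2*pi} (chain_potential \<alpha>)"
    unfolding chain_potential_def using \<open>0 < lo\<close> by (intro continuous_intros) auto
  ultimately obtain v where "lo \<le> v" "v \<le> 2*pi" "chain_potential \<alpha> v = T"
    using IVT' by blast
  then show ?thesis
    using that chain_level_dual_eq_iff unfolding lo_def T_def by auto
qed

text \<open>On the self-dual line the level is y + k/y + const (chain_level_self_dual), hence bounded by its
  values at the endpoints. Along the chain, chain_potential grows by m minus this value.\<close>
lemma chain_level_self_dual_gap:
  assumes "0 < \<alpha>" "\<alpha> \<le> 1" "0 < m" "0 < x0" and start: "chain_level \<alpha> x0 (4*pi^2/x0) < m"
  obtains \<delta> where "0 < \<delta>"
    "\<And>y. x0 \<le> y \<Longrightarrow> y \<le> 4*pi^2*\<alpha>/(m + 2*pi*\<alpha>) \<Longrightarrow> chain_level \<alpha> y (4*pi^2/y) + \<delta> \<le> m"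
proof -
  define xs where "xs = 4*pi^2*\<alpha>/(m + 2*pi*\<alpha>)"
  have "0 < m + 2*pi*\<alpha>"
    using assms pi_gt_zero by (simp add: add_pos_pos)
  have "xs < 2*pi"
    unfolding xs_def using \<open>0 < m + 2*pi*\<alpha>\<close> \<open>0 < m\<close> by (simp add: divide_less_eq power2_eq_square algebra_simps)
  have "4*pi^2/xs = (m + 2*pi*\<alpha>)/\<alpha>"
    unfolding xs_def using assms \<open>0 < m + 2*pi*\<alpha>\<close> by simp
  then have "chain_level \<alpha> xs (4*pi^2/xs) = xs + (2*\<alpha> - 1)*((m + 2*pi*\<alpha>)/\<alpha>) - 4*pi*\<alpha>"
    unfolding chain_level_self_dual by simp
  also have "\<dots> = xs - 2*pi + 2*m - m/\<alpha>"
    using assms by (simp add: field_simps)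
  finally have "chain_level \<alpha> xs (4*pi^2/xs) = xs - 2*pi + 2*m - m/\<alpha>" .
  moreover have "m \<le> m/\<alpha>"
    using assms by (simp add: le_divide_eq)
  ultimately have "chain_level \<alpha> xs (4*pi^2/xs) < m"
    using \<open>xs < 2*pi\<close> by linarith
  show ?thesis
  proof
    show "0 < m - max (chain_level \<alpha> x0 (4*pi^2/x0)) (chain_level \<alpha> xs (4*pi^2/xs))"
      using start \<open>chain_level \<alpha> xs (4*pi^2/xs) < m\<close> by simp
    fix y assume "x0 \<le> y" "y \<le> 4*pi^2*\<alpha>/(m + 2*pi*\<alpha>)"
    then show "chain_level \<alpha> y (4*pi^2/y) + (m - max (chain_level \<alpha> x0 (4*pi^2/x0)) (chain_level \<alpha> xs (4*pi^2/xs))) \<le> m"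
      using add_divide_le_max[OF \<open>0 < x0\<close>, of y xs "(2*\<alpha> - 1)*(4*pi^2)"]
      unfolding xs_def chain_level_self_dual by (simp add: max_diff_distrib_left)
  qed
qed

lemma chain_potential_gain:
  assumes "chain_level \<alpha> v (4*pi^2/x) = chain_level \<alpha> x b"
  shows "chain_potential \<alpha> v = chain_potential \<alpha> x + (chain_level \<alpha> x b - chain_level \<alpha> x (4*pi^2/x))"
  using assms unfolding chain_level_dual_eq_iff unfolding chain_level_def chain_potential_def
  by (simp add: left_diff_distrib right_diff_distrib diff_divide_distrib)

lemma chain_not_terminal_le:
  assumes "0 < x" "0 < m + 2*pi*\<alpha>" "chain_level \<alpha> x b = m" "x + \<alpha>*b - 4*pi^2/x \<le> 2*pi*\<alpha>"
  shows "x \<le> 4*pi^2*\<alpha>/(m + 2*pi*\<alpha>)"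
proof -
  have "x + \<alpha>*b - 4*pi^2/x = m + 4*pi*\<alpha> - \<alpha>*(4*pi^2/x)"
    using assms(3) unfolding chain_level_def chain_potential_def
    by (auto simp: left_diff_distrib right_diff_distrib diff_divide_distrib)
  then have "m + 2*pi*\<alpha> \<le> \<alpha>*(4*pi^2/x)"
    using assms(4) by linarith
  then show ?thesis
    using assms(1,2) by (simp add: le_divide_eq field_simps)
qed

lemma chain_step:
  assumes "0 \<le> \<alpha>" "\<alpha> \<le> 1" "0 < x" "x \<le> 2*pi" "4*pi^2 < x * b"
    and not_terminal: "x + \<alpha>*b - 4*pi^2/x \<le> 2*pi*\<alpha>"
    and "0 < \<delta>" and gap: "chain_level \<alpha> x (4*pi^2/x) + \<delta> \<le> chain_level \<alpha> x b"
  obtains v where "4*pi^2/b \<le> v" "v \<le> 2*pi" "4*pi^2 < v * (4*pi^2/x)"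
    "chain_level \<alpha> v (4*pi^2/x) = chain_level \<alpha> x b" "chain_potential \<alpha> x + \<delta> \<le> chain_potential \<alpha> v"
proof -
  obtain v where v: "x \<le> v" "4*pi^2/b \<le> v" "v \<le> 2*pi"
      and level: "chain_level \<alpha> v (4*pi^2/x) = chain_level \<alpha> x b"
    using chain_successor_exists[OF assms(1-6)] by blast
  have gain: "chain_potential \<alpha> x + \<delta> \<le> chain_potential \<alpha> v"
    using chain_potential_gain[OF level] gap by simp
  then have "x < v"
    using \<open>0 < \<delta>\<close> \<open>x \<le> v\<close> by (cases "x = v") auto
  then have "4*pi^2 < v * (4*pi^2/x)"
    using \<open>0 < x\<close> by (simp add: less_divide_eq)
  then show ?thesis
    using that v level gain by blast
qed

text \<open>G abstracts vacuum_dominated \<alpha> \<epsilon> A B: only these two closure properties are used.\<close>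

locale dual_closed =
  fixes \<alpha> :: real and G :: "real \<Rightarrow> real \<Rightarrow> bool"
  assumes alpha: "0 < \<alpha>" "\<alpha> \<le> 1"
    and low_temperature: "\<And>p q. 2*pi < p \<Longrightarrow> 2*pi < q \<Longrightarrow> G p q"
    and from_dual: "\<And>x b \<beta>1 \<beta>2. 0 < \<beta>1 \<Longrightarrow> \<beta>1 \<le> x \<Longrightarrow> 0 < \<beta>2 \<Longrightarrow> \<beta>2 \<le> b \<Longrightarrow> 4*pi^2 < x * b \<Longrightarrow>
        G (4*pi^2/\<beta>1) (4*pi^2/\<beta>2) \<Longrightarrow>
        4*pi^2/\<beta>1 + 4*pi^2/\<beta>2 + (1 - \<alpha>)*(x + b - \<beta>1 - \<beta>2) \<le> x + b \<Longrightarrow> G x b"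
begin

lemma from_dual_pair:
  assumes "0 < \<beta>1" "\<beta>1 \<le> x" "0 < \<beta>2" "\<beta>2 \<le> b" "4*pi^2 < x * b"
    and "G (4*pi^2/\<beta>1) (4*pi^2/\<beta>2)" "G (4*pi^2/\<beta>2) (4*pi^2/\<beta>1)"
    and "4*pi^2/\<beta>1 + 4*pi^2/\<beta>2 + (1 - \<alpha>)*(x + b - \<beta>1 - \<beta>2) \<le> x + b"
  shows "G x b \<and> G b x"
  using from_dual[of \<beta>1 x \<beta>2 b] from_dual[of \<beta>2 b \<beta>1 x] assms by (simp add: algebra_simps)

lemma direct_from_low_temperature:
  assumes "0 < x" "x \<le> 2*pi" "4*pi^2 < x * b" and gap: "2*pi*\<alpha> < x + \<alpha>*b - 4*pi^2/x"
  shows "G x b \<and> G b x"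
proof -
  define t where "t = min pi ((x + \<alpha>*b - 4*pi^2/x - 2*pi*\<alpha>)/6)"
  define \<beta>1 where "\<beta>1 = min x (2*pi - t)"
  define \<beta>2 where "\<beta>2 = min (2*pi) (2*pi - t)" \<comment> \<open>that is, 2 pi - t, in the shape of dual_cost_le\<close>
  have t: "0 < t" "t \<le> pi" "t \<le> (x + \<alpha>*b - 4*pi^2/x - 2*pi*\<alpha>)/6"
    using gap unfolding t_def by (simp_all only: min.cobounded1 min.cobounded2) simp
  then have "6*t \<le> x + \<alpha>*b - 4*pi^2/x - 2*pi*\<alpha>"
    by simp
  have "2*pi < b"
    by (rule partner_gt_2pi) (use assms in auto)
  have \<beta>: "0 < \<beta>1" "\<beta>1 \<le> x" "0 < \<beta>2" "\<beta>2 \<le> b" "\<beta>1 < 2*pi" "\<beta>2 < 2*pi"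
    using assms t \<open>2*pi < b\<close> pi_gt_zero unfolding \<beta>1_def \<beta>2_def by auto
  have "4*pi^2/\<beta>1 + (1 - \<alpha>)*(x - \<beta>1) \<le> 4*pi^2/x + 3*t"
    unfolding \<beta>1_def by (rule dual_cost_le) (use alpha t assms in auto)
  moreover have "4*pi^2/\<beta>2 + (1 - \<alpha>)*(2*pi - \<beta>2) \<le> 4*pi^2/(2*pi) + 3*t"
    unfolding \<beta>2_def by (rule dual_cost_le) (use alpha t in auto)
  moreover have "4*pi^2/(2*pi) = 2*pi"
    by (simp add: power2_eq_square)
  moreover have "(1 - \<alpha>)*(x + b - \<beta>1 - \<beta>2) =
      (1 - \<alpha>)*(x - \<beta>1) + (1 - \<alpha>)*(2*pi - \<beta>2) + (b - 2*pi) - (\<alpha>*b - 2*pi*\<alpha>)"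
    by (simp add: algebra_simps)
  ultimately have "4*pi^2/\<beta>1 + 4*pi^2/\<beta>2 + (1 - \<alpha>)*(x + b - \<beta>1 - \<beta>2) \<le> x + b"
    using \<open>6*t \<le> _\<close> by linarith
  moreover have "G (4*pi^2/\<beta>1) (4*pi^2/\<beta>2)" "G (4*pi^2/\<beta>2) (4*pi^2/\<beta>1)"
    using low_temperature dual_gt_2pi \<beta> by auto
  ultimately show ?thesis
    using from_dual_pair \<beta> assms by blast
qed

lemma from_chain_successor:
  assumes "0 < x" "4*pi^2 < x * b" "4*pi^2/b \<le> v"
    and level: "chain_level \<alpha> v (4*pi^2/x) = chain_level \<alpha> x b"
    and "G v (4*pi^2/x)" "G (4*pi^2/x) v"
  shows "G x b \<and> G b x"
proof -
  have "0 < b"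
    using assms by (intro zero_less_mult_pos[of x b]) (auto intro: less_trans[rotated])
  then have "0 < v"
    using assms by (auto intro: less_le_trans[rotated])
  then have "0 < 4*pi^2/v" "4*pi^2/v \<le> b"
    using assms \<open>0 < b\<close> by (auto simp: divide_le_eq mult.commute)
  moreover have "4*pi^2/x + v + (1 - \<alpha>)*(x + b - x - 4*pi^2/v) \<le> x + b"
    using level unfolding chain_level_dual_eq_iff chain_potential_def by (simp add: algebra_simps)
  ultimately show ?thesis
    using from_dual_pair[of x x "4*pi^2/v" b] assms by simp
qed

lemma chain_descent:
  assumes "0 < x0" "0 < \<delta>" "0 < m + 2*pi*\<alpha>"
    and gap: "\<And>y. x0 \<le> y \<Longrightarrow> y \<le> 4*pi^2*\<alpha>/(m + 2*pi*\<alpha>) \<Longrightarrow> chain_level \<alpha> y (4*pi^2/y) + \<delta> \<le> m"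
  shows "x0 \<le> x \<Longrightarrow> x \<le> 2*pi \<Longrightarrow> 4*pi^2 < x * b \<Longrightarrow> chain_level \<alpha> x b = m \<Longrightarrow>
    chain_potential \<alpha> (4*pi^2*\<alpha>/(m + 2*pi*\<alpha>)) < chain_potential \<alpha> x + real k * \<delta> \<Longrightarrow> G x b \<and> G b x"
proof (induction k arbitrary: x b)
  case 0
  show ?case
  proof (cases "2*pi*\<alpha> < x + \<alpha>*b - 4*pi^2/x")
    case True
    then show ?thesis
      using direct_from_low_temperature 0 \<open>0 < x0\<close> by auto
  next
    case False
    then have "x \<le> 4*pi^2*\<alpha>/(m + 2*pi*\<alpha>)"
      using chain_not_terminal_le 0 \<open>0 < x0\<close> \<open>0 < m + 2*pi*\<alpha>\<close> by force
    then have "chain_potential \<alpha> x \<le> chain_potential \<alpha> (4*pi^2*\<alpha>/(m + 2*pi*\<alpha>))"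
      by (intro chain_potential_mono[OF alpha(2)]) (use 0 \<open>0 < x0\<close> in auto)
    then show ?thesis
      using 0 by simp
  qed
next
  case (Suc k)
  have "0 < x"
    using Suc.prems \<open>0 < x0\<close> by linarith
  show ?case
  proof (cases "2*pi*\<alpha> < x + \<alpha>*b - 4*pi^2/x")
    case True
    then show ?thesis
      using direct_from_low_temperature Suc.prems \<open>0 < x\<close> by auto
  next
    case False
    then have "x \<le> 4*pi^2*\<alpha>/(m + 2*pi*\<alpha>)"
      using chain_not_terminal_le Suc.prems \<open>0 < x\<close> \<open>0 < m + 2*pi*\<alpha>\<close> by force
    then obtain v where v: "4*pi^2/b \<le> v" "v \<le> 2*pi" "4*pi^2 < v * (4*pi^2/x)"
        and level: "chain_level \<alpha> v (4*pi^2/x) = chain_level \<alpha> x b"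
        and gain: "chain_potential \<alpha> x + \<delta> \<le> chain_potential \<alpha> v"
      using chain_step[of \<alpha> x b \<delta>] alpha Suc.prems False \<open>0 < x\<close> \<open>0 < \<delta>\<close> gap[of x] by auto
    then have "x \<le> v"
      using \<open>0 < x\<close> by (simp add: less_divide_eq)
    then have "G v (4*pi^2/x) \<and> G (4*pi^2/x) v"
      using Suc.IH[of v "4*pi^2/x"] Suc.prems v level gain by (auto simp: algebra_simps)
    then show ?thesis
      using from_chain_successor[OF \<open>0 < x\<close> _ v(1) level] Suc.prems by blast
  qed
qed

lemma holds_if_chain_level_pos:
  assumes "0 < x0" "x0 \<le> 2*pi" "4*pi^2 < x0 * b0" and level: "0 < chain_level \<alpha> x0 b0"
  shows "G x0 b0 \<and> G b0 x0"
proof -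
  define m where "m = chain_level \<alpha> x0 b0"
  have "0 < m + 2*pi*\<alpha>"
    using level alpha pi_gt_zero unfolding m_def by (simp add: add_pos_pos)
  have "4*pi^2/x0 < b0"
    using assms by (simp add: divide_less_eq mult.commute)
  then have "chain_level \<alpha> x0 (4*pi^2/x0) < m"
    using alpha unfolding m_def chain_level_def by simp
  then obtain \<delta> where "0 < \<delta>"
      and gap: "\<And>y. x0 \<le> y \<Longrightarrow> y \<le> 4*pi^2*\<alpha>/(m + 2*pi*\<alpha>) \<Longrightarrow> chain_level \<alpha> y (4*pi^2/y) + \<delta> \<le> m"
    using chain_level_self_dual_gap[OF alpha _ \<open>0 < x0\<close>] level unfolding m_def by blast
  obtain k where "chain_potential \<alpha> (4*pi^2*\<alpha>/(m + 2*pi*\<alpha>)) - chain_potential \<alpha> x0 < real k * \<delta>"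
    using ex_less_of_nat_mult[OF \<open>0 < \<delta>\<close>] by blast
  then show ?thesis
    using chain_descent[OF \<open>0 < x0\<close> \<open>0 < \<delta>\<close> \<open>0 < m + 2*pi*\<alpha>\<close> gap, of x0 b0 k] assms
    unfolding m_def by auto
qed

lemma holds_on_D_alpha:
  assumes "(bL, bR) \<in> D_alpha \<alpha>"
  shows "G bL bR"
proof -
  have "G x b \<and> G b x" if b: "2*pi < b" and x: "phi_alpha \<alpha> b < x" for x b
  proof (cases "2*pi < x")
    case True
    then show ?thesis
      using low_temperature b by blast
  next
    case False
    have "0 < b"
      using b pi_gt_zero by linarith
    have "4*pi^2/b < x" and root: "(\<alpha>*(4*pi - b) + sqrt (\<alpha>^2*(4*pi - b)^2 + 16*pi^2*(1 - \<alpha>)))/2 < x"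
      using x unfolding phi_alpha_def by auto
    moreover have "0 < 4*pi^2/b"
      using \<open>0 < b\<close> by simp
    ultimately have "0 < x" "4*pi^2 < x * b"
      using \<open>0 < b\<close> by (linarith, simp add: divide_less_eq)
    moreover have "0 < chain_level \<alpha> x b"
      using chain_level_pos[OF alpha(2) \<open>0 < x\<close> root] .
    ultimately show ?thesis
      using holds_if_chain_level_pos False by simp
  qed
  then show ?thesis
    using assms unfolding D_alpha_def by auto
qed

end

lemma D_alpha_pos:
  assumes "(bL, bR) \<in> D_alpha \<alpha>"
  shows "0 < bL" "0 < bR"
proof -
  have "0 < x" "0 < b" if "2*pi < b" "phi_alpha \<alpha> b < x" for x b
  proof -
    show "0 < b"
      using that pi_gt_zero by linarith
    then show "0 < x"
      using that unfolding phi_alpha_def by (auto intro: less_trans[rotated])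
  qed
  then show "0 < bL" "0 < bR"
    using assms unfolding D_alpha_def by auto
qed

lemma abs_ln_sub_le:
  fixes Z E K :: real
  assumes "exp E \<le> Z" "Z \<le> K * exp E"
  shows "\<bar>ln Z - E\<bar> \<le> ln (max K 1)"
proof -
  have "0 < Z"
    using assms(1) exp_gt_zero[of E] by linarith
  have "exp E \<le> K * exp E"
    using assms by linarith
  then have "1 \<le> K"
    using mult_le_cancel_right_pos[of "exp E" 1 K] by simp
  have "ln Z \<le> ln (K * exp E)"
    using assms(2) \<open>0 < Z\<close> by simp
  then have "ln Z \<le> ln K + E"
    using \<open>1 \<le> K\<close> by (simp add: ln_mult)
  moreover have "E \<le> ln Z"
    using assms(1) \<open>0 < Z\<close> by (simp add: ln_ge_iff)
  ultimately show ?thesis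
    using \<open>1 \<le> K\<close> by (simp add: max_def)
qed

lemma log_partition_fn_bounded:
  assumes "vacuum_dominated \<alpha> \<epsilon> A B bL bR" "0 < bL" "0 < bR"
  shows "\<exists>K. \<forall>c n. in_class \<alpha> \<epsilon> A B c n \<longrightarrow> \<bar>ln (partition_fn c n bL bR) - c/24 * (bL + bR)\<bar> \<le> K"
proof -
  obtain K where K: "\<And>c n. in_class \<alpha> \<epsilon> A B c n \<Longrightarrow> partition_fn c n bL bR \<le> K * exp (c*(bL + bR)/24)"
    using assms(1) unfolding vacuum_dominated_def by blast
  have "\<bar>ln (partition_fn c n bL bR) - c/24 * (bL + bR)\<bar> \<le> ln (max K 1)"
    if cl: "in_class \<alpha> \<epsilon> A B c n" for c n
    using abs_ln_sub_le[OF partition_fn_ge_vacuum[OF in_classD(1,2)[OF cl] assms(2,3)] K[OF cl]] by simp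
  then show ?thesis
    by blast
qed

lemma log_partition_fn_bounded_dual:
  assumes "vacuum_dominated \<alpha> \<epsilon> A B (4*pi^2/bL) (4*pi^2/bR)" "0 < bL" "0 < bR"
  shows "\<exists>K. \<forall>c n. in_class \<alpha> \<epsilon> A B c n \<longrightarrow>
    \<bar>ln (partition_fn c n bL bR) - pi^2 * c / 6 * (1/bL + 1/bR)\<bar> \<le> K"
proof -
  obtain K where K: "\<forall>c n. in_class \<alpha> \<epsilon> A B c n \<longrightarrow>
      \<bar>ln (partition_fn c n (4*pi^2/bL) (4*pi^2/bR)) - c/24 * (4*pi^2/bL + 4*pi^2/bR)\<bar> \<le> K"
    using log_partition_fn_bounded[OF assms(1)] assms(2,3) by auto
  have "\<bar>ln (partition_fn c n bL bR) - pi^2 * c / 6 * (1/bL + 1/bR)\<bar> \<le> K"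
    if cl: "in_class \<alpha> \<epsilon> A B c n" for c n
  proof -
    have "pi^2 * c / 6 * (1/bL + 1/bR) = c/24 * (4*pi^2/bL + 4*pi^2/bR)"
      by (simp add: field_simps)
    then show ?thesis
      using K cl unfolding partition_fn_modular[OF in_classD(1)[OF cl] assms(2,3)] by metis
  qed
  then show ?thesis
    by blast
qed

theorem corollary1:
  fixes \<alpha> \<epsilon> :: real and A :: "real \<Rightarrow> real" and B :: "real \<Rightarrow> real \<Rightarrow> real"
  assumes "0 < \<alpha>" and "\<alpha> \<le> 1" and "\<epsilon> > 0"
    and "\<And>\<beta>. \<beta> > 2*pi \<Longrightarrow> A \<beta> \<ge> 0"
    and "\<And>bL bR. bL > 0 \<Longrightarrow> bR > 0 \<Longrightarrow> bL * bR > 4*pi^2 \<Longrightarrow> B bL bR \<ge> 0"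
  shows "(\<forall>(bL, bR)\<in>D_alpha \<alpha>. \<exists>K::real. \<forall>c n. in_class \<alpha> \<epsilon> A B c n \<longrightarrow>
            \<bar>ln (partition_fn c n bL bR) - c/24 * (bL + bR)\<bar> \<le> K)
       \<and> (\<forall>bL bR. bL > 0 \<longrightarrow> bR > 0 \<longrightarrow> (4*pi^2/bL, 4*pi^2/bR) \<in> D_alpha \<alpha> \<longrightarrow>
            (\<exists>K::real. \<forall>c n. in_class \<alpha> \<epsilon> A B c n \<longrightarrow>
            \<bar>ln (partition_fn c n bL bR) - pi^2 * c / 6 * (1/bL + 1/bR)\<bar> \<le> K))"
proof -
  interpret dual_closed \<alpha> "vacuum_dominated \<alpha> \<epsilon> A B"
    by unfold_locales (use assms vacuum_dominated_low_temperature vacuum_dominated_from_dual in auto)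
  show ?thesis
    using log_partition_fn_bounded log_partition_fn_bounded_dual holds_on_D_alpha D_alpha_pos
    by auto
qed

end
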